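(* Let $\delta>0$ and $0<\alpha<2$. Suppose there is a constant $C_2>0$ such that $$\mu_V\big((f-\mu_V(f))^2\big)\le C_2 D_{\alpha,V,\delta}(f,f)\quad\text{for all } f\in C_b^\infty(\mathbb R^d).$$ Then there is a constant $\lambda_0>0$ such that $\int e^{\lambda_0|x|}\,\mu_V(dx)<\infty$.
   Context: Let $d\ge1$. $V:\mathbb R^d\to\mathbb R$ is a locally bounded measurable function such that $e^{-V}$ is bounded and $\int e^{-V(x)}dx<\infty$; $\mu_V(dx)=\frac{e^{-V(x)}}{\int e^{-V(y)}dy}dx$, and $\mu_V(f)=\int f\,d\mu_V$. $C_b^\infty(\mathbb R^d)$ is the set of smooth functions on $\mathbb R^d$ that are bounded together with all their derivatives. For $\alpha\in(0,2)$, $\delta\ge0$, $$D_{\alpha,V,\delta}(f,f):=\iint\frac{(f(y)-f(x))^2}{|y-x|^{d+\alpha}}e^{-\delta|y-x|}\,dy\,\mu_V(dx).$$ *)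

theory Defs
  imports "HOL-Analysis.Analysis"
begin

text \<open>R^d is modelled by an arbitrary Euclidean space 'a with d = DIM('a) (so d \<ge> 1).\<close>

definition partial_deriv :: "'a::euclidean_space \<Rightarrow> ('a \<Rightarrow> real) \<Rightarrow> 'a \<Rightarrow> real" where
  "partial_deriv i f x = frechet_derivative f (at x) i"

fun iter_partial :: "'a::euclidean_space list \<Rightarrow> ('a \<Rightarrow> real) \<Rightarrow> 'a \<Rightarrow> real" where
  "iter_partial [] f = f"
| "iter_partial (i # is) f = partial_deriv i (iter_partial is f)"

definition Cb_inf :: "('a::euclidean_space \<Rightarrow> real) \<Rightarrow> bool" where
  "Cb_inf f \<longleftrightarrow> (\<forall>is. set is \<subseteq> Basis \<longrightarrow>
      (\<forall>x. iter_partial is f differentiable (at x)) \<and> bounded (range (iter_partial is f)))"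

definition locally_bounded :: "('a::euclidean_space \<Rightarrow> real) \<Rightarrow> bool" where
  "locally_bounded V \<longleftrightarrow> (\<forall>x. \<exists>e>0. bounded (V ` ball x e))"

definition muV :: "('a::euclidean_space \<Rightarrow> real) \<Rightarrow> 'a measure" where
  "muV V = density lebesgue
     (\<lambda>x. ennreal (exp (- V x) / (\<integral>y. exp (- V y) \<partial>lebesgue)))"

definition Dform :: "real \<Rightarrow> ('a::euclidean_space \<Rightarrow> real) \<Rightarrow> real \<Rightarrow> ('a \<Rightarrow> real) \<Rightarrow> ennreal" where
  "Dform \<alpha> V \<delta> f = (\<integral>\<^sup>+ x. (\<integral>\<^sup>+ y. ennreal ((f y - f x)^2 / norm (y - x) powr (real DIM('a) + \<alpha>)
        * exp (- \<delta> * norm (y - x))) \<partial>lebesgue) \<partial>muV V)"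

end

theory Submission
  imports Defs "HOL-Probability.Probability_Measure" "HOL-Real_Asymp.Real_Asymp"
begin

text \<open>Test the Poincare inequality on f = exp \<circ> \<phi>, where \<phi> is a bounded smooth L-Lipschitz
  approximation of L \<langle>x, b\<rangle> for a basis vector b. Since
  \<bar>exp (\<phi> y) - exp (\<phi> x)\<bar> \<le> exp (\<phi> x) (exp (L \<bar>y - x\<bar>) - 1), the Dirichlet form of f is at
  most L^2 K \<mu>(f^2) with K = \<integral> \<bar>z\<bar>^(2 - d - \<alpha>) exp (- \<delta> \<bar>z\<bar> / 2) dz finite. For small L the
  inequality gives Var f \<le> \<mu>(f^2) / 2, i.e. \<mu>(f^2) \<le> 2 \<mu>(f)^2. Splitting \<mu>(f) over a set B of
  measure at most 1/8, off which \<phi> is bounded independently of the approximation, and using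
  Cauchy--Schwarz on B bounds \<mu>(f^2) uniformly. Fatou's lemma then gives
  \<mu>(exp (\<plusminus>2L \<langle>x, b\<rangle>)) < \<infinity> for every basis vector b, and these moments control
  exp (2L \<bar>x\<bar> / d).\<close>

section \<open>Bounded smooth functions of one variable\<close>

coinductive bounded_smooth :: "(real \<Rightarrow> real) \<Rightarrow> bool" where
  "(\<And>t. \<bar>g t\<bar> \<le> B) \<Longrightarrow> (\<And>t. (g has_real_derivative g' t) (at t)) \<Longrightarrow> bounded_smooth g'
    \<Longrightarrow> bounded_smooth g"

lemma bounded_smoothE:
  assumes "bounded_smooth g"
  obtains B g' where "\<And>t. \<bar>g t\<bar> \<le> B" "\<And>t. (g has_real_derivative g' t) (at t)"
    "bounded_smooth g'"
  using assms by (cases rule: bounded_smooth.cases) blast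

lemma bounded_smooth_const: "bounded_smooth (\<lambda>_. c)"
proof (coinduction arbitrary: c rule: bounded_smooth.coinduct)
  case bounded_smooth
  show ?case by (intro exI[of _ "\<lambda>_. c"] exI[of _ "\<bar>c\<bar>"] exI[of _ "\<lambda>_. 0"]) auto
qed

text \<open>Closure under products is proved coinductively for the class of finite sums of
  products, which, unlike the class of products, is closed under differentiation.\<close>

definition sum_prods :: "((real \<Rightarrow> real) \<times> (real \<Rightarrow> real)) list \<Rightarrow> real \<Rightarrow> real" where
  "sum_prods ps t = (\<Sum>(p, q)\<leftarrow>ps. p t * q t)"

lemma sum_prods_Nil [simp]: "sum_prods [] t = 0"
  by (simp add: sum_prods_def)

lemma sum_prods_Cons [simp]: "sum_prods ((p, q) # ps) t = p t * q t + sum_prods ps t"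
  by (simp add: sum_prods_def)

lemma sum_prods_bounded_has_derivative:
  assumes "\<forall>(p, q)\<in>set ps. bounded_smooth p \<and> bounded_smooth q"
  shows "\<exists>B ps'. (\<forall>(p, q)\<in>set ps'. bounded_smooth p \<and> bounded_smooth q) \<and>
           (\<forall>t. \<bar>sum_prods ps t\<bar> \<le> B) \<and> (\<forall>t. (sum_prods ps has_real_derivative sum_prods ps' t) (at t))"
  using assms
proof (induction ps)
  case Nil
  show ?case by (intro exI[of _ 0] exI[of _ "[]"]) (simp add: sum_prods_def)
next
  case (Cons pq ps)
  obtain p q where pq: "pq = (p, q)" by force
  with Cons.prems have smooth: "bounded_smooth p" "bounded_smooth q" by auto
  then obtain Bp p' Bq q' where
    p: "\<And>t. \<bar>p t\<bar> \<le> Bp" "\<And>t. (p has_real_derivative p' t) (at t)" "bounded_smooth p'" and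
    q: "\<And>t. \<bar>q t\<bar> \<le> Bq" "\<And>t. (q has_real_derivative q' t) (at t)" "bounded_smooth q'"
    by (metis bounded_smoothE)
  from Cons obtain B ps' where IH: "\<forall>(p, q)\<in>set ps'. bounded_smooth p \<and> bounded_smooth q"
    "\<And>t. \<bar>sum_prods ps t\<bar> \<le> B" "\<And>t. (sum_prods ps has_real_derivative sum_prods ps' t) (at t)"
    by auto
  have bound: "\<bar>sum_prods ((p, q) # ps) t\<bar> \<le> Bp * Bq + B" for t
  proof -
    have "\<bar>p t * q t\<bar> \<le> Bp * Bq"
      unfolding abs_mult by (rule mult_mono) (use p(1) q(1) abs_ge_zero order_trans in blast)+
    then show ?thesis using IH(2)[of t] by simp
  qed
  have deriv: "(sum_prods ((p, q) # ps) has_real_derivative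
      sum_prods ((p', q) # (p, q') # ps') t) (at t)" for t
  proof -
    have "sum_prods ((p, q) # ps) = (\<lambda>t. p t * q t + sum_prods ps t)" by (simp add: fun_eq_iff)
    then show ?thesis by (auto intro!: derivative_eq_intros p(2) q(2) IH(3) simp: algebra_simps)
  qed
  have smooth': "\<forall>(p, q)\<in>set ((p', q) # (p, q') # ps'). bounded_smooth p \<and> bounded_smooth q"
    using IH(1) p(3) q(3) smooth by auto
  show ?case
    unfolding pq
    by (intro exI[of _ "Bp * Bq + B"] exI[of _ "(p', q) # (p, q') # ps'"] conjI allI bound deriv smooth')
qed

lemma bounded_smooth_sum_prods:
  assumes "\<forall>(p, q)\<in>set ps. bounded_smooth p \<and> bounded_smooth q"
  shows "bounded_smooth (sum_prods ps)"
  using assms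
proof (coinduction arbitrary: ps rule: bounded_smooth.coinduct)
  case bounded_smooth
  then show ?case by (metis sum_prods_bounded_has_derivative)
qed

lemma bounded_smooth_mult:
  "bounded_smooth f \<Longrightarrow> bounded_smooth g \<Longrightarrow> bounded_smooth (\<lambda>t. f t * g t)"
proof -
  have "sum_prods [(f, g)] = (\<lambda>t. f t * g t)" by (simp add: fun_eq_iff)
  then show "bounded_smooth f \<Longrightarrow> bounded_smooth g \<Longrightarrow> ?thesis"
    using bounded_smooth_sum_prods[of "[(f, g)]"] by simp
qed

lemma bounded_smooth_add:
  "bounded_smooth f \<Longrightarrow> bounded_smooth g \<Longrightarrow> bounded_smooth (\<lambda>t. f t + g t)"
proof -
  have "sum_prods [(f, \<lambda>_. 1), (g, \<lambda>_. 1)] = (\<lambda>t. f t + g t)" by (simp add: fun_eq_iff)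
  then show "bounded_smooth f \<Longrightarrow> bounded_smooth g \<Longrightarrow> ?thesis"
    using bounded_smooth_sum_prods[of "[(f, \<lambda>_. 1), (g, \<lambda>_. 1)]"] bounded_smooth_const[of 1]
    by simp
qed

lemma bounded_smooth_sin: "bounded_smooth (\<lambda>t. a * sin (b * t + c))"
proof (coinduction arbitrary: a c rule: bounded_smooth.coinduct)
  case bounded_smooth
  have "\<bar>a * sin (b * t + c)\<bar> \<le> \<bar>a\<bar>" for t
    by (simp add: abs_mult mult_left_le)
  moreover have "((\<lambda>t. a * sin (b * t + c)) has_real_derivative
      (a * b) * sin (b * t + (c + pi / 2))) (at t)" for t
  proof -
    have "sin (b * t + (c + pi / 2)) = cos (b * t + c)"
      by (simp add: sin_add cos_add)
    have "((\<lambda>t. a * sin (b * t + c)) has_real_derivative a * (cos (b * t + c) * b)) (at t)"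
      by (auto intro!: derivative_eq_intros)
    then show ?thesis using \<open>sin _ = cos _\<close> by (simp add: mult_ac)
  qed
  ultimately show ?case
    by (intro exI[of _ "\<lambda>t. a * sin (b * t + c)"] exI[of _ "\<bar>a\<bar>"]
        exI[of _ "\<lambda>t. (a * b) * sin (b * t + (c + pi / 2))"]) blast
qed

lemma bounded_smooth_exp:
  assumes "bounded_smooth h"
  shows "bounded_smooth (\<lambda>t. exp (h t))"
proof -
  obtain Bh h' where h: "\<And>t. \<bar>h t\<bar> \<le> Bh" "\<And>t. (h has_real_derivative h' t) (at t)"
    "bounded_smooth h'"
    using assms by (blast elim: bounded_smoothE)
  txt \<open>All derivatives of \<open>exp \<circ> h\<close> have the form \<open>p \<cdot> exp \<circ> h\<close> with \<open>p\<close> bounded smooth.\<close>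
  have "bounded_smooth (\<lambda>t. p t * exp (h t))" if "bounded_smooth p" for p
    using that
  proof (coinduction arbitrary: p rule: bounded_smooth.coinduct)
    case bounded_smooth
    then obtain Bp p' where p: "\<And>t. \<bar>p t\<bar> \<le> Bp" "\<And>t. (p has_real_derivative p' t) (at t)"
      "bounded_smooth p'"
      by (blast elim: bounded_smoothE)
    define q where "q t = p' t + p t * h' t" for t
    have "\<bar>p t * exp (h t)\<bar> \<le> Bp * exp Bh" for t
    proof -
      have "0 \<le> Bp" using p(1)[of 0] by linarith
      moreover have "exp (h t) \<le> exp Bh" using h(1)[of t] by simp
      ultimately show ?thesis by (simp add: abs_mult mult_mono p(1))
    qed
    moreover have "((\<lambda>t. p t * exp (h t)) has_real_derivative q t * exp (h t)) (at t)" for t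
      unfolding q_def by (auto intro!: derivative_eq_intros p(2) h(2) simp: algebra_simps)
    moreover have "bounded_smooth q"
      unfolding q_def by (intro bounded_smooth_add bounded_smooth_mult p h bounded_smooth)
    ultimately show ?case
      by - (rule exI[of _ "\<lambda>t. p t * exp (h t)"], rule exI[of _ "Bp * exp Bh"],
          rule exI[of _ "\<lambda>t. q t * exp (h t)"], blast)
  qed
  from this[OF bounded_smooth_const[of 1]] show ?thesis by simp
qed

lemma has_derivative_ridge:
  assumes "(h has_real_derivative D) (at (x \<bullet> e))"
  shows "((\<lambda>x::'a::euclidean_space. c * h (x \<bullet> e)) has_derivative (\<lambda>v. c * (D * (v \<bullet> e)))) (at x)"
proof -
  have "(h has_derivative (\<lambda>u. D * u)) (at (x \<bullet> e))"
    using assms by (simp add: has_field_derivative_def)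
  from diff_chain_at[OF has_derivative_inner_left[OF has_derivative_ident] this]
  show ?thesis by (intro has_derivative_mult_right) (simp add: o_def)
qed

lemma iter_partial_ridge:
  assumes "bounded_smooth g"
  shows "\<exists>c h. bounded_smooth h \<and>
           iter_partial is (\<lambda>x::'a::euclidean_space. g (x \<bullet> e)) = (\<lambda>x. c * h (x \<bullet> e))"
proof (induction "is")
  case Nil
  show ?case using assms by (intro exI[of _ 1] exI[of _ g]) simp
next
  case (Cons i "is")
  then obtain c h where h: "bounded_smooth h"
    "iter_partial is (\<lambda>x::'a. g (x \<bullet> e)) = (\<lambda>x. c * h (x \<bullet> e))"
    by blast
  then obtain B h' where h': "\<And>t. (h has_real_derivative h' t) (at t)" "bounded_smooth h'"
    by (metis bounded_smoothE)
  have "partial_deriv i (\<lambda>x::'a. c * h (x \<bullet> e)) x = (c * (i \<bullet> e)) * h' (x \<bullet> e)" for x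
    using frechet_derivative_at[OF has_derivative_ridge[OF h'(1)[of "x \<bullet> e"]], symmetric]
    by (simp add: partial_deriv_def mult_ac)
  then have "iter_partial (i # is) (\<lambda>x::'a. g (x \<bullet> e)) = (\<lambda>x. (c * (i \<bullet> e)) * h' (x \<bullet> e))"
    by (simp add: h(2) fun_eq_iff)
  with h'(2) show ?case by blast
qed

lemma Cb_inf_ridge:
  assumes "bounded_smooth g"
  shows "Cb_inf (\<lambda>x::'a::euclidean_space. g (x \<bullet> e))"
  unfolding Cb_inf_def
proof (intro allI impI conjI)
  fix "is" :: "'a list" and x :: 'a
  obtain c h where h: "bounded_smooth h"
    "iter_partial is (\<lambda>x::'a. g (x \<bullet> e)) = (\<lambda>x. c * h (x \<bullet> e))"
    using iter_partial_ridge[OF assms] by blast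
  then obtain B h' where h': "\<And>t. \<bar>h t\<bar> \<le> B" "\<And>t. (h has_real_derivative h' t) (at t)"
    by (metis bounded_smoothE)
  show "iter_partial is (\<lambda>x. g (x \<bullet> e)) differentiable at x"
    unfolding h(2) differentiable_def using has_derivative_ridge[OF h'(2)[of "x \<bullet> e"]] by blast
  have "norm (c * h (x \<bullet> e)) \<le> \<bar>c\<bar> * B" for x :: 'a
    by (simp add: abs_mult mult_left_mono h'(1))
  then show "bounded (range (iter_partial is (\<lambda>x. g (x \<bullet> e))))"
    unfolding h(2) bounded_iff by blast
qed

section \<open>Integrability of the jump kernel\<close>

lemma dyadic_bracket:
  fixes r :: real
  assumes "0 < r"
  shows "2 powr (\<lceil>log 2 r\<rceil> - 1) < r \<and> r \<le> 2 powr \<lceil>log 2 r\<rceil>"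
proof -
  have "real_of_int (\<lceil>log 2 r\<rceil> - 1) < log 2 r" "log 2 r \<le> real_of_int \<lceil>log 2 r\<rceil>"
    by linarith+
  then have "2 powr (\<lceil>log 2 r\<rceil> - 1) < 2 powr log 2 r" "2 powr log 2 r \<le> 2 powr \<lceil>log 2 r\<rceil>"
    by simp_all
  with assms show ?thesis by simp
qed

lemma dyadic_bracket_le_one:
  fixes r :: real
  assumes "0 < r" "r \<le> 1"
  obtains k :: nat where "2 powr (- real k - 1) < r" "r \<le> 2 powr (- real k)"
proof
  define k where "k = nat (- \<lceil>log 2 r\<rceil>)"
  have "log 2 r \<le> 0" using assms by simp
  then have "real_of_int \<lceil>log 2 r\<rceil> = - real k"
    unfolding k_def by simp
  then show "2 powr (- real k - 1) < r" "r \<le> 2 powr (- real k)"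
    using dyadic_bracket[OF assms(1)] by simp_all
qed

lemma dyadic_bracket_gt_one:
  fixes r :: real
  assumes "1 < r"
  obtains k :: nat where "2 powr real k < r" "r \<le> 2 powr (real k + 1)"
proof
  define k where "k = nat (\<lceil>log 2 r\<rceil> - 1)"
  have "0 < log 2 r" using assms by simp
  then have "real_of_int (\<lceil>log 2 r\<rceil> - 1) = real k"
    unfolding k_def by simp
  then show "2 powr real k < r" "r \<le> 2 powr (real k + 1)"
    using dyadic_bracket[of r] assms by (simp_all add: algebra_simps)
qed

lemma summable_two_powr_affine:
  fixes a b :: real
  assumes "b < 0"
  shows "summable (\<lambda>k::nat. 2 powr (a + b * real k))"
proof -
  have "2 powr (a + b * real k) = 2 powr a * (2 powr b) ^ k" for k
    by (simp add: powr_add powr_power mult.commute)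
  moreover have "summable (\<lambda>k. 2 powr a * (2 powr b) ^ k)"
    using assms by (intro summable_mult summable_geometric) (simp add: powr_less_one)
  ultimately show ?thesis by simp
qed

lemma nn_integral_suminf_cball_finite:
  fixes w r :: "nat \<Rightarrow> real"
  assumes "\<And>k. 0 \<le> w k" "\<And>k. 0 \<le> r k" and "summable (\<lambda>k. w k * r k ^ DIM('a))"
  shows "(\<integral>\<^sup>+ z. (\<Sum>k. ennreal (w k) * indicator (cball (0::'a::euclidean_space) (r k)) z) \<partial>lborel)
    < \<infinity>"
proof -
  define U where "U = unit_ball_vol (real DIM('a))"
  have "cball (0::'a) \<rho> \<in> sets lborel" for \<rho> by simp
  then have "(\<lambda>z. ennreal (w k) * indicator (cball (0::'a) (r k)) z) \<in> borel_measurable lborel" for k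
    by measurable
  then have "(\<integral>\<^sup>+ z. (\<Sum>k. ennreal (w k) * indicator (cball (0::'a) (r k)) z) \<partial>lborel)
      = (\<Sum>k. ennreal (w k) * emeasure lborel (cball (0::'a) (r k)))"
    by (simp add: nn_integral_suminf nn_integral_cmult_indicator)
  also have "\<dots> = (\<Sum>k. ennreal (U * (w k * r k ^ DIM('a))))"
    using assms(1,2) by (simp add: emeasure_cball U_def ennreal_mult[symmetric] mult.left_commute)
  also have "\<dots> = ennreal (\<Sum>k. U * (w k * r k ^ DIM('a)))"
    using assms by (intro suminf_ennreal2 summable_mult) (auto simp: U_def)
  finally show ?thesis by simp
qed

lemma nn_integral_norm_powr_unit_ball_finite:
  fixes a :: real
  assumes "0 \<le> a" "a < real DIM('a::euclidean_space)"
  shows "(\<integral>\<^sup>+ z. ennreal (indicator {z::'a. norm z \<le> 1} z * norm z powr (-a)) \<partial>lborel) < \<infinity>"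
proof -
  define w where "w k = 2 powr ((real k + 1) * a)" for k :: nat
  define r where "r k = 2 powr (- real k)" for k :: nat
  define F where "F k z = ennreal (w k) * indicator (cball (0::'a) (r k)) z" for k z
  have pointwise: "ennreal (indicator {z::'a. norm z \<le> 1} z * norm z powr (-a)) \<le> (\<Sum>k. F k z)"
    for z
  proof (cases "z \<noteq> 0 \<and> norm z \<le> 1")
    case True
    then obtain k where k: "2 powr (- real k - 1) < norm z" "norm z \<le> 2 powr (- real k)"
      using dyadic_bracket_le_one[of "norm z"] by auto
    have "norm z powr (-a) \<le> (2 powr (- real k - 1)) powr (-a)"
      using k(1) assms(1) by (intro powr_mono2') auto
    also have "\<dots> = w k" by (simp add: w_def powr_powr algebra_simps)
    finally have "ennreal (indicator {z::'a. norm z \<le> 1} z * norm z powr (-a)) \<le> F k z"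
      using True k(2) by (simp add: F_def r_def indicator_def ennreal_leI)
    also have "\<dots> \<le> (\<Sum>k. F k z)"
      using sum_le_suminf[of "\<lambda>k. F k z" "{k}"] by simp
    finally show ?thesis .
  qed (auto simp: indicator_def)
  have "summable (\<lambda>k. w k * r k ^ DIM('a))"
  proof -
    have "w k * r k ^ DIM('a) = 2 powr (a + (a - DIM('a)) * real k)" for k
      by (simp add: w_def r_def powr_power powr_add[symmetric] algebra_simps)
    then show ?thesis
      using summable_two_powr_affine[of "a - DIM('a)" a] assms(2) by simp
  qed
  then have "(\<integral>\<^sup>+ z. (\<Sum>k. F k z) \<partial>lborel) < \<infinity>"
    unfolding F_def by (intro nn_integral_suminf_cball_finite) (simp_all add: w_def r_def)
  moreover have "(\<integral>\<^sup>+ z. ennreal (indicator {z::'a. norm z \<le> 1} z * norm z powr (-a)) \<partial>lborel)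
      \<le> (\<integral>\<^sup>+ z. (\<Sum>k. F k z) \<partial>lborel)"
    by (intro nn_integral_mono pointwise)
  ultimately show ?thesis by simp
qed

lemma nn_integral_norm_powr_outside_unit_ball_finite:
  fixes a :: real
  assumes "real DIM('a::euclidean_space) < a"
  shows "(\<integral>\<^sup>+ z. ennreal (indicator {z::'a. 1 < norm z} z * norm z powr (-a)) \<partial>lborel) < \<infinity>"
proof -
  define w where "w k = 2 powr (- real k * a)" for k :: nat
  define r where "r k = 2 powr (real k + 1)" for k :: nat
  define F where "F k z = ennreal (w k) * indicator (cball (0::'a) (r k)) z" for k z
  have "0 < a" using assms by (smt (verit) of_nat_0_le_iff)
  have pointwise: "ennreal (indicator {z::'a. 1 < norm z} z * norm z powr (-a)) \<le> (\<Sum>k. F k z)"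
    for z
  proof (cases "1 < norm z")
    case True
    then obtain k where k: "2 powr real k < norm z" "norm z \<le> 2 powr (real k + 1)"
      using dyadic_bracket_gt_one by blast
    have "norm z powr (-a) \<le> (2 powr real k) powr (-a)"
      using k(1) \<open>0 < a\<close> by (intro powr_mono2') auto
    also have "\<dots> = w k" by (simp add: w_def powr_powr)
    finally have "ennreal (indicator {z::'a. 1 < norm z} z * norm z powr (-a)) \<le> F k z"
      using True k(2) by (simp add: F_def r_def indicator_def ennreal_leI)
    also have "\<dots> \<le> (\<Sum>k. F k z)"
      using sum_le_suminf[of "\<lambda>k. F k z" "{k}"] by simp
    finally show ?thesis .
  qed (auto simp: indicator_def)
  have "summable (\<lambda>k. w k * r k ^ DIM('a))"
  proof -
    have "w k * r k ^ DIM('a) = 2 powr (DIM('a) + (DIM('a) - a) * real k)" for k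
      by (simp add: w_def r_def powr_power powr_add[symmetric] algebra_simps)
    then show ?thesis
      using summable_two_powr_affine[of "DIM('a) - a" "DIM('a)"] assms by simp
  qed
  then have "(\<integral>\<^sup>+ z. (\<Sum>k. F k z) \<partial>lborel) < \<infinity>"
    unfolding F_def by (intro nn_integral_suminf_cball_finite) (simp_all add: w_def r_def)
  moreover have "(\<integral>\<^sup>+ z. ennreal (indicator {z::'a. 1 < norm z} z * norm z powr (-a)) \<partial>lborel)
      \<le> (\<integral>\<^sup>+ z. (\<Sum>k. F k z) \<partial>lborel)"
    by (intro nn_integral_mono pointwise)
  ultimately show ?thesis by simp
qed

lemma cube_le_exp:
  fixes x :: real
  assumes "0 \<le> x"
  shows "x ^ 3 \<le> 27 * exp x"
proof -
  have "x / 3 \<le> exp (x / 3)" using exp_ge_add_one_self[of "x / 3"] by linarith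
  then have "(x / 3) ^ 3 \<le> exp (x / 3) ^ 3"
    using assms by (intro power_mono) auto
  also have "exp (x / 3) ^ 3 = exp x" by (simp add: exp_of_nat_mult[symmetric])
  finally show ?thesis by (simp add: power_divide)
qed

lemma powr_mult_exp_neg_le:
  fixes r c p :: real
  assumes "1 \<le> r" "0 < c"
  shows "r powr p * exp (- c * r) \<le> 27 / c ^ 3 * r powr (p - 3)"
proof -
  have "(c * r) ^ 3 \<le> 27 * exp (c * r)"
    using assms by (intro cube_le_exp) simp
  then have "r ^ 3 * exp (- c * r) \<le> 27 / c ^ 3"
    using assms(2) by (simp add: power_mult_distrib field_simps exp_minus)
  then have "r powr (p - 3) * (r ^ 3 * exp (- c * r)) \<le> r powr (p - 3) * (27 / c ^ 3)"
    by (intro mult_left_mono) auto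
  moreover have "r powr p = r powr (p - 3) * r ^ 3"
  proof -
    have "r powr 3 = r ^ 3" using powr_realpow[of r 3] assms(1) by simp
    then show ?thesis by (metis diff_add_cancel powr_add)
  qed
  ultimately show ?thesis by (simp add: mult_ac)
qed

lemma nn_integral_jump_kernel_finite:
  fixes c \<alpha> :: real
  assumes "0 < c" "0 < \<alpha>" "\<alpha> < 2"
  shows "(\<integral>\<^sup>+ z. ennreal (norm (z::'a::euclidean_space) powr (2 - real DIM('a) - \<alpha>)
     * exp (- c * norm z)) \<partial>lborel) < \<infinity>"
proof -
  define d where "d = real DIM('a)"
  define a where "a = d - 1 + \<alpha> / 2"
  define C where "C = 27 / c ^ 3"
  have "1 \<le> d" by (simp add: d_def)
  have pointwise: "norm z powr (2 - d - \<alpha>) * exp (- c * norm z)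
      \<le> indicator {z::'a. norm z \<le> 1} z * norm z powr (-a)
        + C * (indicator {z::'a. 1 < norm z} z * norm z powr (-(d + 1)))" for z :: 'a
  proof (cases "norm z \<le> 1")
    case True
    have "norm z powr (2 - d - \<alpha>) \<le> norm z powr (-a)"
      using True assms by (intro powr_mono') (auto simp: a_def)
    moreover have "exp (- c * norm z) \<le> 1" using assms by simp
    ultimately have "norm z powr (2 - d - \<alpha>) * exp (- c * norm z) \<le> norm z powr (-a)"
      by (intro order_trans[OF mult_left_le]) auto
    then show ?thesis using True by (simp add: indicator_def)
  next
    case False
    have "norm z powr (2 - d - \<alpha>) * exp (- c * norm z) \<le> C * norm z powr (2 - d - \<alpha> - 3)"
      unfolding C_def using False assms by (intro powr_mult_exp_neg_le) auto
    also have "\<dots> \<le> C * norm z powr (-(d + 1))"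
      using False assms by (intro mult_left_mono powr_mono) (auto simp: C_def)
    finally show ?thesis using False by (simp add: indicator_def)
  qed
  have "(\<integral>\<^sup>+ z. ennreal (norm (z::'a) powr (2 - d - \<alpha>) * exp (- c * norm z)) \<partial>lborel)
     \<le> (\<integral>\<^sup>+ z. ennreal (indicator {z::'a. norm z \<le> 1} z * norm z powr (-a))
          + ennreal C * ennreal (indicator {z::'a. 1 < norm z} z * norm z powr (-(d + 1))) \<partial>lborel)"
    using pointwise assms
    by (intro nn_integral_mono) (simp add: C_def ennreal_mult[symmetric] ennreal_plus[symmetric] del: ennreal_plus)
  also have "\<dots> = (\<integral>\<^sup>+ z. ennreal (indicator {z::'a. norm z \<le> 1} z * norm z powr (-a)) \<partial>lborel)
       + ennreal C * (\<integral>\<^sup>+ z. ennreal (indicator {z::'a. 1 < norm z} z * norm z powr (-(d + 1))) \<partial>lborel)"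
    by (subst nn_integral_add) (auto simp: nn_integral_cmult)
  also have "\<dots> < \<infinity>"
    using nn_integral_norm_powr_unit_ball_finite[where 'a='a and a=a]
      nn_integral_norm_powr_outside_unit_ball_finite[where 'a='a and a="d + 1"] \<open>1 \<le> d\<close> assms
    by (simp add: a_def d_def ennreal_mult_less_top)
  finally show ?thesis by (simp add: d_def)
qed

section \<open>The Dirichlet form of an exponential\<close>

lemma sets_muV [simp]: "sets (muV V) = sets lebesgue"
  by (simp add: muV_def)

lemma space_muV [simp]: "space (muV V) = UNIV"
  by (simp add: muV_def)

lemma borel_measurable_lebesgue_sets:
  fixes f :: "'a::euclidean_space \<Rightarrow> 'b::topological_space"
  assumes "sets M = sets lebesgue" "f \<in> borel_measurable borel"
  shows "f \<in> borel_measurable M"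
proof -
  have "f \<in> borel_measurable lebesgue" using assms(2) by (intro measurable_completion) simp
  then show ?thesis by (subst measurable_cong_sets[OF assms(1)]) auto
qed

lemma borel_measurable_muV: "f \<in> borel_measurable borel \<Longrightarrow> f \<in> borel_measurable (muV V)"
  by (rule borel_measurable_lebesgue_sets) simp_all

lemma prob_space_muV:
  fixes V :: "'a::euclidean_space \<Rightarrow> real"
  assumes V_meas: "V \<in> borel_measurable lebesgue"
    and V_int: "(\<integral>\<^sup>+ x. ennreal (exp (- V x)) \<partial>lebesgue) < \<infinity>"
  shows "prob_space (muV V)"
proof
  define Z where "Z = (\<integral>y. exp (- V y) \<partial>lebesgue)"
  have [measurable]: "(\<lambda>x. exp (- V x)) \<in> borel_measurable lebesgue" using V_meas by measurable
  have "integrable lebesgue (\<lambda>x. exp (- V x))"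
    using V_int by (subst integrable_iff_bounded) auto
  then have nnZ: "(\<integral>\<^sup>+ x. ennreal (exp (- V x)) \<partial>lebesgue) = ennreal Z"
    unfolding Z_def by (intro nn_integral_eq_integral) auto
  have "0 < Z"
  proof (rule ccontr)
    assume "\<not> 0 < Z"
    then have "(\<integral>\<^sup>+ x. ennreal (exp (- V x)) \<partial>lebesgue) = 0" using nnZ by (simp add: ennreal_eq_0_iff)
    then have "AE x in (lebesgue :: 'a measure). False" by (subst (asm) nn_integral_0_iff_AE) auto
    then have "ae_filter (lebesgue :: 'a measure) = bot"
      using trivial_limit_def by blast
    then have "emeasure (lebesgue :: 'a measure) UNIV = 0"
      by (simp add: ae_filter_eq_bot_iff)
    then show False by (simp add: emeasure_completion)
  qed
  have "emeasure (muV V) (space (muV V)) = (\<integral>\<^sup>+ x. ennreal (exp (- V x)) * ennreal (1 / Z) \<partial>lebesgue)"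
    unfolding muV_def Z_def[symmetric] using \<open>0 < Z\<close>
    by (subst emeasure_density) (auto simp: ennreal_mult[symmetric])
  also have "\<dots> = 1"
    using \<open>0 < Z\<close> by (subst nn_integral_multc) (auto simp: nnZ ennreal_mult[symmetric])
  finally show "emeasure (muV V) (space (muV V)) = 1" .
qed

lemma exp_minus_one_le:
  fixes u :: real
  assumes "0 \<le> u"
  shows "exp u - 1 \<le> u * exp u"
proof -
  have "(1 - u) * exp u \<le> exp (- u) * exp u"
    using exp_ge_add_one_self[of "- u"] by (intro mult_right_mono) auto
  then show ?thesis by (simp add: exp_minus field_simps)
qed

lemma exp_diff_sq_le:
  fixes p q u :: real
  assumes "\<bar>p - q\<bar> \<le> u"
  shows "(exp p - exp q)^2 \<le> (exp q)^2 * (exp u - 1)^2"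
proof -
  have "\<bar>exp (p - q) - 1\<bar> \<le> exp u - 1"
  proof (cases "0 \<le> p - q")
    case False
    have "1 - exp (p - q) \<le> exp (q - p) - 1"
      using exp_ge_add_one_self[of "p - q"] exp_ge_add_one_self[of "q - p"] by linarith
    moreover have "exp (q - p) \<le> exp u" using assms by simp
    moreover have "\<bar>exp (p - q) - 1\<bar> = 1 - exp (p - q)" using False by simp
    ultimately show ?thesis by linarith
  qed (use assms in simp)
  then have "(exp (p - q) - 1)^2 \<le> (exp u - 1)^2"
    by (metis abs_ge_zero power2_abs power_mono)
  moreover have "exp p - exp q = exp q * (exp (p - q) - 1)"
    by (simp add: exp_diff field_simps)
  ultimately show ?thesis
    by (simp add: power_mult_distrib mult_left_mono)
qed

lemma jump_kernel_exp_le: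
  fixes L \<delta> r d \<alpha> :: real
  assumes "0 \<le> r" "0 \<le> L" "4 * L \<le> \<delta>"
  shows "(exp (L * r) - 1)^2 / r powr (d + \<alpha>) * exp (- \<delta> * r)
     \<le> L^2 * (r powr (2 - d - \<alpha>) * exp (- (\<delta> / 2) * r))"
proof (cases "r = 0")
  case False
  then have "0 < r" using assms by simp
  have "(exp (L * r) - 1)^2 \<le> (L * r * exp (L * r))^2"
    using exp_minus_one_le[of "L * r"] assms by (intro power_mono) auto
  also have "\<dots> = L^2 * r powr 2 * exp (2 * L * r)"
    using \<open>0 < r\<close> by (simp add: power_mult_distrib exp_double[symmetric] mult_ac)
  finally have "(exp (L * r) - 1)^2 / r powr (d + \<alpha>) * exp (- \<delta> * r)
      \<le> L^2 * r powr 2 * exp (2 * L * r) / r powr (d + \<alpha>) * exp (- \<delta> * r)"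
    by (intro mult_right_mono divide_right_mono) auto
  also have "\<dots> = L^2 * r powr (2 - d - \<alpha>) * exp (2 * L * r - \<delta> * r)"
    using \<open>0 < r\<close> by (simp add: powr_diff exp_diff exp_minus field_simps)
  also have "\<dots> \<le> L^2 * r powr (2 - d - \<alpha>) * exp (- (\<delta> / 2) * r)"
  proof -
    have "4 * L * r \<le> \<delta> * r" using assms by (intro mult_right_mono) auto
    then show ?thesis by (intro mult_left_mono) auto
  qed
  finally show ?thesis by (simp add: mult_ac)
qed simp

lemma nn_integral_lborel_translate:
  fixes f :: "'a::euclidean_space \<Rightarrow> ennreal"
  assumes [measurable]: "f \<in> borel_measurable borel"
  shows "(\<integral>\<^sup>+ y. f (y - x) \<partial>lborel) = (\<integral>\<^sup>+ z. f z \<partial>lborel)"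
proof -
  have "(\<integral>\<^sup>+ z. f z \<partial>lborel) = (\<integral>\<^sup>+ z. f z \<partial>(distr lborel borel ((+) (- x))))"
    by (simp add: lborel_distr_plus)
  also have "\<dots> = (\<integral>\<^sup>+ y. f (- x + y) \<partial>lborel)"
    by (subst nn_integral_distr) auto
  finally show ?thesis by simp
qed

lemma Dform_exp_le:
  fixes \<phi> :: "'a::euclidean_space \<Rightarrow> real"
  assumes lip: "\<And>x y. \<bar>\<phi> y - \<phi> x\<bar> \<le> L * norm (y - x)"
    and L: "0 \<le> L" "4 * L \<le> \<delta>" and [measurable]: "\<phi> \<in> borel_measurable borel"
  shows "Dform \<alpha> V \<delta> (\<lambda>x. exp (\<phi> x))
    \<le> ennreal (L^2) * (\<integral>\<^sup>+ z. ennreal (norm (z::'a) powr (2 - real DIM('a) - \<alpha>)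
          * exp (- (\<delta> / 2) * norm z)) \<partial>lborel)
      * (\<integral>\<^sup>+ x. ennreal ((exp (\<phi> x))^2) \<partial>muV V)"
proof -
  define d where "d = real DIM('a)"
  define g where "g z = norm (z::'a) powr (2 - d - \<alpha>) * exp (- (\<delta> / 2) * norm z)" for z
  define K where "K = (\<integral>\<^sup>+ z. ennreal (g z) \<partial>lborel)"
  define c where "c x = L^2 * (exp (\<phi> x))^2" for x
  have [measurable]: "g \<in> borel_measurable borel" unfolding g_def by measurable
  have "0 \<le> c x" "0 \<le> g z" for x z by (simp_all add: c_def g_def)
  have pointwise: "(exp (\<phi> y) - exp (\<phi> x))^2 / norm (y - x) powr (d + \<alpha>) * exp (- \<delta> * norm (y - x))
       \<le> c x * g (y - x)" for x y
  proof -
    define r where "r = norm (y - x)"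
    have "(exp (\<phi> y) - exp (\<phi> x))^2 \<le> (exp (\<phi> x))^2 * (exp (L * r) - 1)^2"
      using lip[of y x] by (intro exp_diff_sq_le) (simp add: r_def)
    then have "(exp (\<phi> y) - exp (\<phi> x))^2 / r powr (d + \<alpha>) * exp (- \<delta> * r)
       \<le> (exp (\<phi> x))^2 * (exp (L * r) - 1)^2 / r powr (d + \<alpha>) * exp (- \<delta> * r)"
      by (intro mult_right_mono divide_right_mono) auto
    also have "\<dots> = (exp (\<phi> x))^2 * ((exp (L * r) - 1)^2 / r powr (d + \<alpha>) * exp (- \<delta> * r))"
      by simp
    also have "\<dots> \<le> (exp (\<phi> x))^2 * (L^2 * (r powr (2 - d - \<alpha>) * exp (- (\<delta> / 2) * r)))"
      using jump_kernel_exp_le[of r L \<delta> d \<alpha>] L by (intro mult_left_mono) (auto simp: r_def)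
    also have "\<dots> = c x * g (y - x)"
      by (simp add: c_def g_def r_def)
    finally show ?thesis by (simp add: r_def)
  qed
  have inner: "(\<integral>\<^sup>+ y. ennreal ((exp (\<phi> y) - exp (\<phi> x))^2 / norm (y - x) powr (d + \<alpha>)
      * exp (- \<delta> * norm (y - x))) \<partial>lebesgue) \<le> ennreal (c x) * K" for x
  proof -
    have "(\<integral>\<^sup>+ y. ennreal ((exp (\<phi> y) - exp (\<phi> x))^2 / norm (y - x) powr (d + \<alpha>)
        * exp (- \<delta> * norm (y - x))) \<partial>lebesgue) \<le> (\<integral>\<^sup>+ y. ennreal (c x) * ennreal (g (y - x)) \<partial>lborel)"
      unfolding nn_integral_completion[of lborel, folded lborel_eq, symmetric]
      using pointwise \<open>\<And>x z. 0 \<le> c x\<close> \<open>\<And>x z. 0 \<le> g z\<close>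
      by (intro nn_integral_mono) (simp add: ennreal_mult[symmetric] ennreal_leI)
    also have "\<dots> = ennreal (c x) * K"
      using nn_integral_lborel_translate[of "\<lambda>z. ennreal (g z)" x]
      by (simp add: nn_integral_cmult K_def)
    finally show ?thesis .
  qed
  have "Dform \<alpha> V \<delta> (\<lambda>x. exp (\<phi> x)) \<le> (\<integral>\<^sup>+ x. ennreal (c x) * K \<partial>muV V)"
    unfolding Dform_def d_def[symmetric] by (intro nn_integral_mono inner)
  also have "\<dots> = ennreal (L^2) * K * (\<integral>\<^sup>+ x. ennreal ((exp (\<phi> x))^2) \<partial>muV V)"
    using borel_measurable_muV[of "\<lambda>x. ennreal ((exp (\<phi> x))^2)" V]
    by (simp add: c_def ennreal_mult nn_integral_multc nn_integral_cmult mult_ac)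
  finally show ?thesis by (simp add: K_def g_def d_def)
qed

section \<open>Exponential moments\<close>

lemma (in prob_space) expectation_indicator_mult_sq_le:
  fixes F :: "'a \<Rightarrow> real"
  assumes B: "B \<in> events" and F: "\<And>x. 0 \<le> F x" "integrable M F" "integrable M (\<lambda>x. (F x)^2)"
  shows "(expectation (\<lambda>x. indicator B x * F x))^2 \<le> prob B * expectation (\<lambda>x. (F x)^2)"
proof -
  have [measurable]: "F \<in> borel_measurable M" using F(2) by measurable
  define J where "J = expectation (\<lambda>x. indicator B x * F x)"
  have "integrable M (\<lambda>x. indicator B x * F x)"
    using integrable_real_mult_indicator[OF B F(2)] by (simp add: mult.commute)
  then have "(\<integral>\<^sup>+ x. ennreal (indicator B x * F x) \<partial>M) = ennreal J"
    unfolding J_def using F(1) by (intro nn_integral_eq_integral) auto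
  then have "ennreal (J^2) = (\<integral>\<^sup>+ x. indicator B x * ennreal (F x) \<partial>M)^2"
    using F(1) by (simp add: ennreal_power[symmetric] J_def integral_nonneg_AE indicator_mult_ennreal)
  also have "\<dots> \<le> (\<integral>\<^sup>+ x. (indicator B x)^2 \<partial>M) * (\<integral>\<^sup>+ x. ennreal (F x)^2 \<partial>M)"
    using B by (intro Cauchy_Schwarz_nn_integral) auto
  also have "\<dots> = ennreal (prob B * expectation (\<lambda>x. (F x)^2))"
  proof -
    have "(\<lambda>x. (indicator B x :: ennreal)^2) = indicator B"
      by (auto simp: fun_eq_iff split: split_indicator)
    then have "(\<integral>\<^sup>+ x. (indicator B x)^2 \<partial>M) = ennreal (prob B)"
      using B by (simp add: emeasure_eq_measure)
    moreover have "(\<integral>\<^sup>+ x. ennreal (F x)^2 \<partial>M) = ennreal (expectation (\<lambda>x. (F x)^2))"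
      using F by (simp add: ennreal_power nn_integral_eq_integral)
    ultimately show ?thesis by (simp add: ennreal_mult)
  qed
  finally show ?thesis
    using F by (simp add: J_def ennreal_le_iff integral_nonneg_AE)
qed

lemma (in prob_space) second_moment_le_of_variance_le:
  fixes F :: "'a \<Rightarrow> real"
  assumes F: "\<And>x. 0 \<le> F x" "integrable M F" "integrable M (\<lambda>x. (F x)^2)"
    and var: "expectation (\<lambda>x. (F x - expectation F)^2) \<le> expectation (\<lambda>x. (F x)^2) / 2"
    and B: "B \<in> events" "prob B \<le> 1/8" and a: "0 \<le> a" "\<And>x. x \<notin> B \<Longrightarrow> F x \<le> a"
  shows "expectation (\<lambda>x. (F x)^2) \<le> 8 * a^2"
proof -
  define m1 m2 J where "m1 = expectation F" and "m2 = expectation (\<lambda>x. (F x)^2)"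
    and "J = expectation (\<lambda>x. indicator B x * F x)"
  have "m2 \<le> 2 * m1^2"
    using var variance_eq[OF F(2,3)] by (simp add: m1_def m2_def)
  have int_BF: "integrable M (\<lambda>x. indicator B x * F x)"
    using integrable_real_mult_indicator[OF B(1) F(2)] by (simp add: mult.commute)
  have "m1 \<le> expectation (\<lambda>x. a + indicator B x * F x)"
    unfolding m1_def using F a int_BF by (intro integral_mono) (auto simp: indicator_def)
  also have "\<dots> = a + J"
    unfolding J_def using int_BF by (simp add: prob_space)
  finally have "m1 \<le> a + J" .
  then have "m1^2 \<le> (a + J)^2"
    using F by (intro power_mono) (auto simp: m1_def integral_nonneg_AE)
  moreover have "(a + J)^2 + (a - J)^2 = 2 * a^2 + 2 * J^2"
    by (simp add: power2_eq_square algebra_simps)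
  moreover have "J^2 \<le> m2 / 8"
  proof -
    have "J^2 \<le> prob B * m2"
      unfolding J_def m2_def by (rule expectation_indicator_mult_sq_le[OF B(1) F])
    also have "\<dots> \<le> 1 / 8 * m2"
      using B(2) F by (intro mult_right_mono) (auto simp: m2_def integral_nonneg_AE)
    finally show ?thesis by simp
  qed
  moreover have "0 \<le> (a - J)^2" by simp
  ultimately show ?thesis
    using \<open>m2 \<le> 2 * m1^2\<close> unfolding m2_def by linarith
qed
lemma nn_integral_le_of_tendsto:
  fixes f :: "nat \<Rightarrow> 'a \<Rightarrow> ennreal"
  assumes [measurable]: "\<And>k. f k \<in> borel_measurable M"
    and lim: "\<And>x. (\<lambda>k. f k x) \<longlonglongrightarrow> g x" and bound: "\<And>k. (\<integral>\<^sup>+ x. f k x \<partial>M) \<le> C"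
  shows "(\<integral>\<^sup>+ x. g x \<partial>M) \<le> C"
proof -
  have "(\<integral>\<^sup>+ x. g x \<partial>M) = (\<integral>\<^sup>+ x. liminf (\<lambda>k. f k x) \<partial>M)"
    by (intro nn_integral_cong) (simp add: lim_imp_Liminf[OF _ lim])
  also have "\<dots> \<le> liminf (\<lambda>k. \<integral>\<^sup>+ x. f k x \<partial>M)"
    by (rule nn_integral_liminf) simp
  also have "\<dots> \<le> limsup (\<lambda>k. \<integral>\<^sup>+ x. f k x \<partial>M)"
    by (rule Liminf_le_Limsup) simp
  also have "\<dots> \<le> C"
    by (rule Limsup_bounded) (simp add: bound)
  finally show ?thesis .
qed

lemma (in prob_space) ex_prob_abs_gt_less:
  fixes X :: "'a \<Rightarrow> real"
  assumes [measurable]: "X \<in> borel_measurable M" and "0 < \<epsilon>"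
  obtains R where "prob {x \<in> space M. R < \<bar>X x\<bar>} < \<epsilon>"
proof -
  define A where "A n = {x \<in> space M. real n < \<bar>X x\<bar>}" for n :: nat
  have "(\<lambda>n. prob (A n)) \<longlonglongrightarrow> prob (\<Inter>n. A n)"
    by (intro finite_Lim_measure_decseq) (auto simp: A_def decseq_def)
  moreover have "(\<Inter>n. A n) = {}"
  proof -
    have "x \<notin> (\<Inter>n. A n)" for x
    proof -
      obtain n :: nat where "\<bar>X x\<bar> < real n" using reals_Archimedean2 by blast
      then show ?thesis by (auto simp: A_def not_less intro!: exI[of _ n])
    qed
    then show ?thesis by blast
  qed
  ultimately have "eventually (\<lambda>n. prob (A n) < \<epsilon>) sequentially"
    using assms(2) by (auto intro: order_tendstoD)
  then obtain n where "prob (A n) < \<epsilon>" by (auto simp: eventually_sequentially)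
  then show ?thesis using that[of "real n"] by (simp add: A_def)
qed

lemma abs_mult_sin_divide_le:
  fixes n t :: real
  assumes "0 < n"
  shows "\<bar>n * sin (t / n)\<bar> \<le> \<bar>t\<bar>" and "\<bar>n * sin (t / n)\<bar> \<le> n"
proof -
  show "\<bar>n * sin (t / n)\<bar> \<le> \<bar>t\<bar>"
    using abs_sin_x_le_abs_x[of "t / n"] assms by (simp add: abs_mult field_simps)
  show "\<bar>n * sin (t / n)\<bar> \<le> n"
    using assms by (simp add: abs_mult mult_left_le)
qed

lemma mult_sin_divide_lipschitz:
  fixes n s t :: real
  assumes "0 < n"
  shows "\<bar>n * sin (s / n) - n * sin (t / n)\<bar> \<le> \<bar>s - t\<bar>"
proof -
  have "\<bar>sin (s / n) - sin (t / n)\<bar> = \<bar>2 * sin ((s / n - t / n) / 2) * cos ((s / n + t / n) / 2)\<bar>"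
    by (simp add: sin_diff_sin)
  also have "\<dots> \<le> 2 * \<bar>(s / n - t / n) / 2\<bar> * 1"
    unfolding abs_mult by (intro mult_mono abs_sin_x_le_abs_x) auto
  finally have "\<bar>sin (s / n) - sin (t / n)\<bar> \<le> \<bar>s - t\<bar> / n"
    using assms by (simp add: diff_divide_distrib[symmetric])
  then have "n * \<bar>sin (s / n) - sin (t / n)\<bar> \<le> \<bar>s - t\<bar>"
    using assms by (simp add: field_simps)
  then show ?thesis
    using assms by (simp add: right_diff_distrib[symmetric] abs_mult)
qed

lemma tendsto_mult_sin_divide: "(\<lambda>k. (real k + 1) * sin (t / (real k + 1))) \<longlonglongrightarrow> t"
proof (cases "t = 0")
  case False
  then show ?thesis by real_asymp
qed simp

lemma exp_norm_le_sum_exp_inner: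
  fixes x :: "'a::euclidean_space"
  assumes "0 \<le> lam"
  shows "exp (lam / DIM('a) * norm x) \<le> (\<Sum>b\<in>Basis. exp (lam * (x \<bullet> b)) + exp (- lam * (x \<bullet> b)))"
proof -
  define m where "m = Max ((\<lambda>b. \<bar>x \<bullet> b\<bar>) ` (Basis :: 'a set))"
  have "m \<in> (\<lambda>b. \<bar>x \<bullet> b\<bar>) ` Basis"
    unfolding m_def by (intro Max_in) auto
  then obtain b0 where b0: "b0 \<in> Basis" "m = \<bar>x \<bullet> b0\<bar>" by blast
  have "norm x \<le> (\<Sum>b\<in>Basis. \<bar>x \<bullet> b\<bar>)" by (rule norm_le_l1)
  also have "\<dots> \<le> (\<Sum>b\<in>(Basis :: 'a set). m)"
    unfolding m_def by (intro sum_mono Max_ge) auto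
  finally have "lam / DIM('a) * norm x \<le> lam / DIM('a) * (DIM('a) * m)"
    using assms by (intro mult_left_mono) auto
  then have "exp (lam / DIM('a) * norm x) \<le> exp (lam * \<bar>x \<bullet> b0\<bar>)"
    using b0 by simp
  also have "\<dots> \<le> exp (lam * (x \<bullet> b0)) + exp (- lam * (x \<bullet> b0))"
    by (cases "0 \<le> x \<bullet> b0") (auto simp: abs_if add_increasing add_increasing2)
  also have "\<dots> \<le> (\<Sum>b\<in>Basis. exp (lam * (x \<bullet> b)) + exp (- lam * (x \<bullet> b)))"
    using b0(1) by (intro member_le_sum) (auto intro: add_nonneg_nonneg)
  finally show ?thesis .
qed

lemma nn_integral_exp_norm_finite:
  fixes M :: "'a::euclidean_space measure"
  assumes sets: "sets M = sets lebesgue" and "0 \<le> lam"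
    and dir: "\<And>b s. b \<in> Basis \<Longrightarrow> \<bar>s\<bar> = 1 \<Longrightarrow> (\<integral>\<^sup>+ x. ennreal (exp (s * lam * (x \<bullet> b))) \<partial>M) < \<infinity>"
  shows "(\<integral>\<^sup>+ x. ennreal (exp (lam / DIM('a) * norm x)) \<partial>M) < \<infinity>"
proof -
  have [measurable]: "(\<lambda>x. x \<bullet> b) \<in> borel_measurable M" for b
    by (rule borel_measurable_lebesgue_sets[OF sets]) simp
  have "(\<integral>\<^sup>+ x. ennreal (exp (lam / DIM('a) * norm x)) \<partial>M)
      \<le> (\<integral>\<^sup>+ x. (\<Sum>b\<in>Basis. ennreal (exp (1 * lam * (x \<bullet> b))) + ennreal (exp (-1 * lam * (x \<bullet> b)))) \<partial>M)"
    using exp_norm_le_sum_exp_inner[OF \<open>0 \<le> lam\<close>, where 'a='a]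
    by (intro nn_integral_mono) (simp add: ennreal_plus[symmetric] sum_ennreal ennreal_leI del: ennreal_plus)
  also have "\<dots> = (\<Sum>b\<in>Basis. \<integral>\<^sup>+ x. ennreal (exp (1 * lam * (x \<bullet> b)))
      + ennreal (exp (-1 * lam * (x \<bullet> b))) \<partial>M)"
    by (rule nn_integral_sum) measurable
  also have "\<dots> = (\<Sum>b\<in>Basis. (\<integral>\<^sup>+ x. ennreal (exp (1 * lam * (x \<bullet> b))) \<partial>M)
      + (\<integral>\<^sup>+ x. ennreal (exp (-1 * lam * (x \<bullet> b))) \<partial>M))"
    by (intro sum.cong refl nn_integral_add) measurable
  also have "\<dots> < \<infinity>"
    using dir[of _ 1] dir[of _ "-1"] by (simp add: ennreal_sum_less_top)
  finally show ?thesis .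
qed

definition poincare_ineq :: "real \<Rightarrow> real \<Rightarrow> ('a::euclidean_space \<Rightarrow> real) \<Rightarrow> real \<Rightarrow> bool" where
  "poincare_ineq C \<alpha> V \<delta> \<longleftrightarrow> (\<forall>f. Cb_inf f \<longrightarrow>
     ennreal (\<integral>x. (f x - (\<integral>y. f y \<partial>muV V))^2 \<partial>muV V) \<le> ennreal C * Dform \<alpha> V \<delta> f)"

locale normalizable_potential =
  fixes V :: "'a::euclidean_space \<Rightarrow> real"
  assumes V_meas: "V \<in> borel_measurable lebesgue"
    and V_int: "(\<integral>\<^sup>+ x. ennreal (exp (- V x)) \<partial>lebesgue) < \<infinity>"
begin

sublocale prob_space "muV V"
  by (rule prob_space_muV[OF V_meas V_int])

lemma exp_second_moment_le:
  fixes \<phi> :: "'a \<Rightarrow> real"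
  assumes poinc: "poincare_ineq C \<alpha> V \<delta>" "0 \<le> C" and L: "0 \<le> L" "4 * L \<le> \<delta>"
    and K: "(\<integral>\<^sup>+ z. ennreal (norm (z::'a) powr (2 - real DIM('a) - \<alpha>) * exp (- (\<delta> / 2) * norm z))
      \<partial>lborel) = ennreal K" "0 \<le> K"
    and small: "C * L^2 * K \<le> 1/2"
    and \<phi>: "Cb_inf (\<lambda>x. exp (\<phi> x))" "\<phi> \<in> borel_measurable borel"
      "\<And>x y. \<bar>\<phi> y - \<phi> x\<bar> \<le> L * norm (y - x)" "\<And>x. \<bar>\<phi> x\<bar> \<le> M"
    and B: "B \<in> events" "prob B \<le> 1/8" "\<And>x. x \<notin> B \<Longrightarrow> \<phi> x \<le> c"
  shows "(\<integral>\<^sup>+ x. ennreal ((exp (\<phi> x))^2) \<partial>muV V) \<le> ennreal (8 * (exp c)^2)"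
proof -
  define F where "F x = exp (\<phi> x)" for x
  define m2 where "m2 = expectation (\<lambda>x. (F x)^2)"
  have meas_F: "F \<in> borel_measurable (muV V)" "(\<lambda>x. (F x)^2) \<in> borel_measurable (muV V)"
    unfolding F_def using \<phi>(2) by (auto intro!: borel_measurable_muV)
  have bound: "\<bar>F x\<bar> \<le> exp M" for x
    using \<phi>(4)[of x] by (simp add: F_def abs_le_iff)
  have bound_sq: "\<bar>(F x)^2\<bar> \<le> (exp M)^2" for x
    using power_mono[OF bound[of x] abs_ge_zero, of 2] by simp
  have int: "integrable (muV V) F" "integrable (muV V) (\<lambda>x. (F x)^2)"
    by (rule integrable_const_bound, use bound bound_sq meas_F in auto)+
  have "0 \<le> m2" unfolding m2_def by (simp add: integral_nonneg_AE)
  have nn_m2: "(\<integral>\<^sup>+ x. ennreal ((F x)^2) \<partial>muV V) = ennreal m2"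
    unfolding m2_def using int(2) by (intro nn_integral_eq_integral) auto
  have "ennreal (expectation (\<lambda>x. (F x - expectation F)^2)) \<le> ennreal C * Dform \<alpha> V \<delta> F"
    using poinc(1) \<phi>(1) unfolding poincare_ineq_def F_def[abs_def] by blast
  also have "\<dots> \<le> ennreal C * (ennreal (L^2) * ennreal K * ennreal m2)"
    using Dform_exp_le[OF \<phi>(3) L \<phi>(2), of \<alpha> V] K(1) nn_m2
    by (intro mult_left_mono) (simp_all add: F_def[abs_def])
  also have "\<dots> = ennreal (C * L^2 * K * m2)"
    using poinc(2) K(2) \<open>0 \<le> m2\<close> by (simp add: ennreal_mult mult_ac)
  finally have "expectation (\<lambda>x. (F x - expectation F)^2) \<le> C * L^2 * K * m2"
    using poinc(2) K(2) \<open>0 \<le> m2\<close> by (subst (asm) ennreal_le_iff) auto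
  also have "\<dots> \<le> m2 / 2"
    using small \<open>0 \<le> m2\<close> mult_right_mono[OF small \<open>0 \<le> m2\<close>] by simp
  finally have var: "expectation (\<lambda>x. (F x - expectation F)^2) \<le> expectation (\<lambda>x. (F x)^2) / 2"
    unfolding m2_def .
  have "m2 \<le> 8 * (exp c)^2"
    unfolding m2_def using B(3)
    by (intro second_moment_le_of_variance_le[OF _ int var B(1,2)]) (auto simp: F_def)
  then show ?thesis
    using nn_m2 by (simp add: F_def ennreal_leI)
qed

lemma directional_exp_moment_finite:
  assumes poinc: "poincare_ineq C \<alpha> V \<delta>" "0 \<le> C" and L: "0 \<le> L" "4 * L \<le> \<delta>"
    and K: "(\<integral>\<^sup>+ z. ennreal (norm (z::'a) powr (2 - real DIM('a) - \<alpha>) * exp (- (\<delta> / 2) * norm z))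
      \<partial>lborel) = ennreal K" "0 \<le> K"
    and small: "C * L^2 * K \<le> 1/2"
    and b: "b \<in> Basis" and s: "\<bar>s\<bar> = 1"
  shows "(\<integral>\<^sup>+ x. ennreal (exp (s * (2 * L) * (x \<bullet> b))) \<partial>muV V) < \<infinity>"
proof -
  have [measurable]: "(\<lambda>x. x \<bullet> b) \<in> borel_measurable (muV V)"
    by (intro borel_measurable_muV) simp
  obtain R where R: "prob {x. R < \<bar>x \<bullet> b\<bar>} < 1/8"
    using ex_prob_abs_gt_less[of "\<lambda>x. x \<bullet> b" "1/8"] by auto
  txt \<open>\<open>n sin (t / n)\<close> is a bounded smooth 1-Lipschitz function of \<open>t\<close> tending to \<open>t\<close>
    as \<open>n \<rightarrow> \<infinity>\<close>, and it is bounded by \<open>R\<close> wherever \<open>\<bar>t\<bar> \<le> R\<close>.\<close>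
  define \<phi> where "\<phi> k x = s * L * ((real k + 1) * sin ((x \<bullet> b) / (real k + 1)))" for k :: nat and x :: 'a
  have bound: "(\<integral>\<^sup>+ x. ennreal ((exp (\<phi> k x))^2) \<partial>muV V) \<le> ennreal (8 * (exp (L * R))^2)" for k
  proof (rule exp_second_moment_le[OF poinc L K small])
    have "bounded_smooth (\<lambda>t. exp (s * L * (real k + 1) * sin (1 / (real k + 1) * t + 0)))"
      by (intro bounded_smooth_exp bounded_smooth_sin)
    from Cb_inf_ridge[OF this, of b] show "Cb_inf (\<lambda>x. exp (\<phi> k x))"
      by (simp add: \<phi>_def mult_ac)
    show "\<phi> k \<in> borel_measurable borel"
      unfolding \<phi>_def by measurable
    have abs_\<phi>: "\<bar>\<phi> k x\<bar> = L * \<bar>(real k + 1) * sin ((x \<bullet> b) / (real k + 1))\<bar>" for x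
      using s L by (simp add: \<phi>_def abs_mult)
    show "\<bar>\<phi> k y - \<phi> k x\<bar> \<le> L * norm (y - x)" for x y
    proof -
      have "\<bar>\<phi> k y - \<phi> k x\<bar>
          = L * \<bar>(real k + 1) * sin ((y \<bullet> b) / (real k + 1)) - (real k + 1) * sin ((x \<bullet> b) / (real k + 1))\<bar>"
        using s L by (simp add: \<phi>_def right_diff_distrib[symmetric] abs_mult)
      also have "\<dots> \<le> L * \<bar>y \<bullet> b - x \<bullet> b\<bar>"
        using mult_sin_divide_lipschitz[of "real k + 1"] L by (intro mult_left_mono) auto
      also have "\<dots> \<le> L * norm (y - x)"
        using Basis_le_norm[OF b, of "y - x"] L by (intro mult_left_mono) (simp_all add: inner_diff_left)
      finally show ?thesis .
    qed
    show "\<bar>\<phi> k x\<bar> \<le> L * (real k + 1)" for x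
      unfolding abs_\<phi> using abs_mult_sin_divide_le(2)[of "real k + 1"] L by (intro mult_left_mono) auto
    have "{x \<in> space (muV V). R < \<bar>x \<bullet> b\<bar>} \<in> events" by measurable
    then show "{x. R < \<bar>x \<bullet> b\<bar>} \<in> events" by simp
    show "prob {x. R < \<bar>x \<bullet> b\<bar>} \<le> 1/8" using R by simp
    show "\<phi> k x \<le> L * R" if "x \<notin> {x. R < \<bar>x \<bullet> b\<bar>}" for x
    proof -
      have "\<phi> k x \<le> L * \<bar>(real k + 1) * sin ((x \<bullet> b) / (real k + 1))\<bar>"
        using abs_\<phi>[of x] by linarith
      also have "\<dots> \<le> L * R"
        using abs_mult_sin_divide_le(1)[of "real k + 1" "x \<bullet> b"] that L by (intro mult_left_mono) auto
      finally show ?thesis .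
    qed
  qed
  have lim: "(\<lambda>k. ennreal ((exp (\<phi> k x))^2)) \<longlonglongrightarrow> ennreal (exp (s * (2 * L) * (x \<bullet> b)))" for x
  proof -
    have "(exp (\<phi> k x))^2 = exp (2 * s * L * ((real k + 1) * sin ((x \<bullet> b) / (real k + 1))))" for k
      by (simp add: \<phi>_def power2_eq_square exp_add[symmetric])
    moreover have "(\<lambda>k. exp (2 * s * L * ((real k + 1) * sin ((x \<bullet> b) / (real k + 1)))))
        \<longlonglongrightarrow> exp (2 * s * L * (x \<bullet> b))"
      by (intro tendsto_exp tendsto_mult_left tendsto_mult_sin_divide)
    ultimately have "(\<lambda>k. ennreal ((exp (\<phi> k x))^2)) \<longlonglongrightarrow> ennreal (exp (2 * s * L * (x \<bullet> b)))"
      by (simp add: tendsto_ennrealI)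
    then show ?thesis by (simp add: mult_ac)
  qed
  have meas: "(\<lambda>x. ennreal ((exp (\<phi> k x))^2)) \<in> borel_measurable (muV V)" for k
    unfolding \<phi>_def by measurable
  have "(\<integral>\<^sup>+ x. ennreal (exp (s * (2 * L) * (x \<bullet> b))) \<partial>muV V) \<le> ennreal (8 * (exp (L * R))^2)"
    by (rule nn_integral_le_of_tendsto[OF meas lim bound])
  then show ?thesis by (rule le_less_trans) simp
qed

end

lemma obtain_small_rate:
  fixes \<delta> C K :: real
  assumes "0 < \<delta>" "0 \<le> C" "0 \<le> K"
  obtains L where "0 < L" "4 * L \<le> \<delta>" "C * L^2 * K \<le> 1/2"
proof
  define q where "q = C * K"
  define L where "L = min (\<delta> / 4) (1 / (2 * (q + 1)))"
  have "0 \<le> q" using assms by (simp add: q_def)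
  show "0 < L" "4 * L \<le> \<delta>" using assms \<open>0 \<le> q\<close> by (auto simp: L_def)
  have "L \<le> 1 / (2 * (q + 1))" by (simp add: L_def)
  moreover have "1 / (2 * (q + 1)) \<le> 1" using \<open>0 \<le> q\<close> by (simp add: field_simps)
  ultimately have "L \<le> 1" "L \<le> 1 / (2 * (q + 1))" by simp_all
  then have "L^2 \<le> 1 / (2 * (q + 1))"
    using \<open>0 < L\<close> \<open>0 \<le> q\<close> mult_mono[of L "1 / (2 * (q + 1))" L 1]
    by (simp add: power2_eq_square)
  then have "q * L^2 \<le> q * (1 / (2 * (q + 1)))"
    using \<open>0 \<le> q\<close> by (rule mult_left_mono)
  also have "\<dots> \<le> 1/2" using \<open>0 \<le> q\<close> by (simp add: field_simps)
  finally show "C * L^2 * K \<le> 1/2" by (simp add: q_def mult_ac)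
qed

theorem proposition1p3:
  fixes V :: "'a::euclidean_space \<Rightarrow> real" and \<alpha> \<delta> C2 :: real
  assumes V_meas: "V \<in> borel_measurable lebesgue"
    and V_lb: "locally_bounded V"
    and V_bdd: "\<exists>M. \<forall>x. exp (- V x) \<le> M"
    and V_int: "(\<integral>\<^sup>+ x. ennreal (exp (- V x)) \<partial>lebesgue) < \<infinity>"
    and delta: "\<delta> > 0" and alpha: "0 < \<alpha>" "\<alpha> < 2"
    and C2: "C2 > 0"
    and poinc: "\<And>f. Cb_inf f \<Longrightarrow>
       ennreal (\<integral>x. (f x - (\<integral>y. f y \<partial>muV V))^2 \<partial>muV V) \<le> ennreal C2 * Dform \<alpha> V \<delta> f"
  shows "\<exists>lam0>0. (\<integral>\<^sup>+ x. ennreal (exp (lam0 * norm x)) \<partial>muV V) < \<infinity>"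
proof -
  interpret normalizable_potential V
    using V_meas V_int by unfold_locales
  have "poincare_ineq C2 \<alpha> V \<delta>"
    using poinc by (simp add: poincare_ineq_def)
  obtain K where K: "(\<integral>\<^sup>+ z. ennreal (norm (z::'a) powr (2 - real DIM('a) - \<alpha>)
      * exp (- (\<delta> / 2) * norm z)) \<partial>lborel) = ennreal K" "0 \<le> K"
    using nn_integral_jump_kernel_finite[of "\<delta> / 2" \<alpha>] delta alpha by (auto simp: less_top_ennreal)
  obtain L where L: "0 < L" "4 * L \<le> \<delta>" "C2 * L^2 * K \<le> 1/2"
    using obtain_small_rate[of \<delta> C2 K] delta C2 K(2) by auto
  have "(\<integral>\<^sup>+ x. ennreal (exp (s * (2 * L) * (x \<bullet> b))) \<partial>muV V) < \<infinity>"
    if "b \<in> Basis" "\<bar>s\<bar> = 1" for b s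
    using directional_exp_moment_finite[OF \<open>poincare_ineq C2 \<alpha> V \<delta>\<close> _ _ L(2) K L(3) that] C2 L(1)
    by simp
  then have "(\<integral>\<^sup>+ x. ennreal (exp (2 * L / DIM('a) * norm x)) \<partial>muV V) < \<infinity>"
    using nn_integral_exp_norm_finite[of "muV V" "2 * L"] L(1) by simp
  then show ?thesis
    using L(1) by (intro exI[of _ "2 * L / DIM('a)"]) simp
qed


end
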